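(* Let $k\colon\mathbb{R}\setminus\{0\}\to[0,\infty)$ satisfy: (a) $k$ is $C^2$ on $\mathbb{R}\setminus\{0\}$ and $(1+t^2)^m k^{(n)}(t)$ is bounded for all $m,n\in\{0,1,2\}$; (b) $k$ is increasing on $(-\infty,0)$ and decreasing on $(0,\infty)$; (c) $k$ is strictly positive on $\mathbb{R}\setminus\{0\}$. Then for every $x\in\mathbb{R}$, $G_{\nu_k}(z)\to\frac{1}{x+\mathrm{i}v_k(x)}$ as $z\to P_k(x)$ non-tangentially from $\mathbb{C}^+$.
   Context: Notation: $\tilde{k}(t)=\mathrm{sign}(t)k(t)$; $H_k(z)=z+z\int_{\mathbb{R}}\frac{\tilde{k}(t)}{z-t}\mathrm{d}t$ ($z\in\mathbb{C}^+$); $F_k(x+\mathrm{i}y)=\int_{\mathbb{R}}\frac{|t|k(t)}{(x-t)^2+y^2}\mathrm{d}t$ ($x\in\mathbb{R}$, $y>0$); $v_k(x)$ is the unique $y\in(0,\infty)$ with $F_k(x+\mathrm{i}y)=1$ (it exists and is unique under (a)-(c)); $P_k(x)=H_k(x+\mathrm{i}v_k(x))$, which is a real number. $\nu_k$ is the $\boxplus$-infinitely divisible probability measure with free characteristic triplet $(0,\frac{k(t)}{|t|}\mathrm{d}t,\int_{-1}^1\tilde{k}(t)\mathrm{d}t)$, i.e. the unique probability measure $\mu$ on $\mathbb{R}$ whose free cumulant transform $\mathcal{C}_\mu(w)=wG_\mu^{\langle-1\rangle}(w)-1$ (defined for $w\in\mathbb{C}^-$ with $1/w$ in a truncated cone $\{z\in\mathbb{C}^+:|\mathrm{Re}z|<\eta\mathrm{Im}z,\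 \mathrm{Im}z>M\}$) equals $\eta w+\int_{\mathbb{R}}\big(\frac{1}{1-tw}-1-tw1_{[-1,1]}(t)\big)\rho(\mathrm{d}t)$ with $\eta=\int_{-1}^1\tilde{k}$, $\rho(\mathrm{d}t)=\frac{k(t)}{|t|}\mathrm{d}t$. $G_\mu(z)=\int\frac{\mu(\mathrm{d}t)}{z-t}$ is the Cauchy transform. "$z\to\xi$ non-tangentially from $\mathbb{C}^+$" means $z\to\xi$ with $z-\xi\in\{r e^{\mathrm{i}\theta}:\delta<\theta<\pi-\delta,\ r>0\}$, for every fixed $\delta\in(0,\pi)$. *)

theory Defs
  imports "HOL-Probability.Probability"
begin

text \<open>Standing hypotheses (a)-(c) on the kernel k, defined on R minus 0
  (the value of k at 0 is irrelevant and never used).\<close>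

definition kernel_hyps :: "(real \<Rightarrow> real) \<Rightarrow> bool" where
  "kernel_hyps k \<longleftrightarrow>
     \<comment> \<open>(a) C^2 on R minus 0\<close>
     (\<forall>t. t \<noteq> 0 \<longrightarrow> k differentiable (at t) \<and> (deriv k) differentiable (at t)
                        \<and> isCont (deriv (deriv k)) t) \<and>
     \<comment> \<open>(a) (1+t^2)^m k^(n)(t) bounded for m,n in {0,1,2}\<close>
     (\<forall>m::nat. \<forall>n::nat. m \<le> 2 \<longrightarrow> n \<le> 2 \<longrightarrow>
        (\<exists>B. \<forall>t. t \<noteq> 0 \<longrightarrow> \<bar>(1 + t\<^sup>2) ^ m * (deriv ^^ n) k t\<bar> \<le> B)) \<and>
     \<comment> \<open>(b) increasing on (-inf,0), decreasing on (0,inf)\<close>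
     monotone_on {..<0} (\<le>) (\<le>) k \<and>
     monotone_on {0<..} (\<le>) (\<ge>) k \<and>
     \<comment> \<open>(c) strictly positive on R minus 0 (so k maps into [0,inf))\<close>
     (\<forall>t. t \<noteq> 0 \<longrightarrow> k t > 0)"

definition H_k :: "(real \<Rightarrow> real) \<Rightarrow> complex \<Rightarrow> complex" where
  "H_k k z = z + z * (LINT t|lborel. complex_of_real (sgn t * k t) / (z - complex_of_real t))"

definition F_k :: "(real \<Rightarrow> real) \<Rightarrow> real \<Rightarrow> real \<Rightarrow> real" where
  "F_k k x y = (LINT t|lborel. \<bar>t\<bar> * k t / ((x - t)\<^sup>2 + y\<^sup>2))"

definition v_k :: "(real \<Rightarrow> real) \<Rightarrow> real \<Rightarrow> real" where
  "v_k k x = (THE y. y > 0 \<and> F_k k x y = 1)"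

definition P_k :: "(real \<Rightarrow> real) \<Rightarrow> real \<Rightarrow> complex" where
  "P_k k x = H_k k (Complex x (v_k k x))"

definition cauchy_transform :: "real measure \<Rightarrow> complex \<Rightarrow> complex" where
  "cauchy_transform \<mu> z = (LINT t|\<mu>. 1 / (z - complex_of_real t))"

definition trunc_cone :: "real \<Rightarrow> real \<Rightarrow> complex set" where
  "trunc_cone a M = {z. \<bar>Re z\<bar> < a * Im z \<and> Im z > M}"

text \<open>Free cumulant transform with drift eta and Levy measure rho(dt) = k(t)/|t| dt\<close>
definition free_cumulant_formula :: "(real \<Rightarrow> real) \<Rightarrow> complex \<Rightarrow> complex" where
  "free_cumulant_formula k w =
     complex_of_real (LINT t:{-1..1}|lborel. sgn t * k t) * w
     + (LINT t|lborel. (1 / (1 - complex_of_real t * w) - 1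
                         - complex_of_real t * w * complex_of_real (indicator {-1..1} t))
                        * complex_of_real (k t / \<bar>t\<bar>))"

text \<open>mu is the free infinitely divisible law with free characteristic triplet
  (0, k(t)/|t| dt, int_{-1}^{1} sign(t) k(t) dt): mu is a Borel probability measure
  on R, G_mu is univalent on some truncated cone, and its inverse Ginv (taking values
  in that cone) is defined on {w : 1/w in a truncated cone} and satisfies
  w Ginv(w) - 1 = free_cumulant_formula k w there.\<close>
definition is_nu_k :: "(real \<Rightarrow> real) \<Rightarrow> real measure \<Rightarrow> bool" where
  "is_nu_k k \<mu> \<longleftrightarrow> prob_space \<mu> \<and> sets \<mu> = sets borel \<and>
     (\<exists>\<alpha> \<beta> \<eta> M Ginv. \<alpha> > 0 \<and> \<beta> > 0 \<and> \<eta> > 0 \<and> M > 0 \<and>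
        inj_on (cauchy_transform \<mu>) (trunc_cone \<alpha> \<beta>) \<and>
        (\<forall>w. w \<noteq> 0 \<and> 1 / w \<in> trunc_cone \<eta> M \<longrightarrow>
           Ginv w \<in> trunc_cone \<alpha> \<beta> \<and> cauchy_transform \<mu> (Ginv w) = w \<and>
           w * Ginv w - 1 = free_cumulant_formula k w))"

text \<open>Non-tangential approach region at xi with aperture parameter delta\<close>
definition nt_sector :: "complex \<Rightarrow> real \<Rightarrow> complex set" where
  "nt_sector \<xi> \<delta> = {\<xi> + complex_of_real r * cis \<theta> | r \<theta>. r > 0 \<and> \<delta> < \<theta> \<and> \<theta> < pi - \<delta>}"

end

theory Submission
  imports Defs "HOL-Complex_Analysis.Complex_Analysis"
begin

text \<open>
  Let \<open>\<Omega> = {z \<in> \<complex>\<^sup>+ : Im H\<^sub>k(z) > 0}\<close>. The free cumulant identity says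
  \<open>G\<^sub>\<nu>(H\<^sub>k(z)) = 1/z\<close> for \<open>z\<close> high in a cone, and analytic continuation extends this to all
  of \<open>\<Omega>\<close>, which is connected because \<open>Im H\<^sub>k(z) = Im z (1 - F\<^sub>k(z))\<close> with \<open>F\<^sub>k\<close> decreasing in
  \<open>Im z\<close>. The point \<open>\<zeta>\<^sub>0 = x + i v\<^sub>k(x)\<close> lies on the boundary of \<open>\<Omega>\<close>, where \<open>H\<^sub>k\<close> is real, and
  \<open>H\<^sub>k(\<zeta>\<^sub>0) = P\<^sub>k(x)\<close>. Since \<open>H\<^sub>k\<close> is holomorphic and nonconstant on \<open>\<complex>\<^sup>+\<close>, the open mapping
  theorem writes every \<open>z \<in> \<complex>\<^sup>+\<close> near \<open>P\<^sub>k(x)\<close> as \<open>H\<^sub>k(\<zeta>)\<close> with \<open>\<zeta>\<close> near \<open>\<zeta>\<^sub>0\<close>; then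
  \<open>\<zeta> \<in> \<Omega>\<close>, so \<open>G\<^sub>\<nu>(z) = 1/\<zeta>\<close> is close to \<open>1/\<zeta>\<^sub>0\<close>. The limit thus holds along all of \<open>\<complex>\<^sup>+\<close>,
  not only non-tangentially.
\<close>

definition cauchy_integral :: "real measure \<Rightarrow> (real \<Rightarrow> real) \<Rightarrow> complex \<Rightarrow> complex" where
  "cauchy_integral M g z = (LINT t|M. complex_of_real (g t) / (z - complex_of_real t))"

lemma cauchy_transform_eq_cauchy_integral: "cauchy_transform \<mu> = cauchy_integral \<mu> (\<lambda>_. 1)"
  by (auto simp: cauchy_transform_def cauchy_integral_def)

lemma H_k_eq_cauchy_integral: "H_k k z = z + z * cauchy_integral lborel (\<lambda>t. sgn t * k t) z"
  by (simp add: H_k_def cauchy_integral_def)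

lemma Im_le_norm_diff_of_real: "Im z \<le> norm (z - complex_of_real t)"
  using abs_Im_le_cmod[of "z - complex_of_real t"] by simp

lemma integrable_bound_mult:
  fixes f :: "'a \<Rightarrow> complex" and g :: "'a \<Rightarrow> real"
  assumes "integrable M g" "f \<in> borel_measurable M" "\<And>t. norm (f t) \<le> \<bar>g t\<bar> * C"
  shows "integrable M f"
proof (rule Bochner_Integration.integrable_bound)
  show "integrable M (\<lambda>t. g t * C)" using assms(1) by simp
  show "AE t in M. norm (f t) \<le> norm (g t * C)"
    by (intro AE_I2 order_trans[OF assms(3)]) (simp add: abs_mult mult_left_mono)
qed (use assms(2) in simp)

lemma borel_measurable_cauchy_kernel:
  fixes g :: "real \<Rightarrow> real"
  assumes "g \<in> borel_measurable M" "sets M = sets borel"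
  shows "(\<lambda>t. complex_of_real (g t) / (z - complex_of_real t) ^ n) \<in> borel_measurable M"
proof -
  have "(\<lambda>t::real. t) \<in> borel_measurable M" using assms(2) measurable_cong_sets by fastforce
  with assms(1) show ?thesis by measurable
qed

lemma integrable_cauchy_kernel:
  fixes g :: "real \<Rightarrow> real"
  assumes g: "integrable M g" "sets M = sets borel" and z: "0 < Im z"
  shows "integrable M (\<lambda>t. complex_of_real (g t) / (z - complex_of_real t) ^ n)"
proof (rule integrable_bound_mult[OF g(1), where C = "1 / Im z ^ n"])
  show "(\<lambda>t. complex_of_real (g t) / (z - complex_of_real t) ^ n) \<in> borel_measurable M"
    using g by (intro borel_measurable_cauchy_kernel) auto
  fix t
  have "0 < norm (z - complex_of_real t)"
    using z Im_le_norm_diff_of_real[of z t] by linarith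
  then have "\<bar>g t\<bar> / norm (z - complex_of_real t) ^ n \<le> \<bar>g t\<bar> / Im z ^ n"
    using z Im_le_norm_diff_of_real[of z t] by (intro divide_left_mono power_mono) auto
  then show "norm (complex_of_real (g t) / (z - complex_of_real t) ^ n) \<le> \<bar>g t\<bar> * (1 / Im z ^ n)"
    by (simp add: norm_divide norm_power)
qed

lemma cauchy_kernel_diff_quotient_remainder:
  fixes w z :: complex and c t :: real
  assumes "w - complex_of_real t \<noteq> 0" "z - complex_of_real t \<noteq> 0" "w \<noteq> z"
  shows "(of_real c / (w - of_real t) - of_real c / (z - of_real t)) / (w - z) - (- of_real c / (z - of_real t) ^ 2)
       = of_real c * (w - z) / ((w - of_real t) * (z - of_real t) ^ 2)"
proof -
  have "w - z \<noteq> 0" using assms(3) by simp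
  with assms(1,2) show ?thesis
    by (simp add: divide_simps) (simp add: algebra_simps power2_eq_square)
qed

lemma cauchy_integral_diff_quotient_eq:
  fixes g :: "real \<Rightarrow> real"
  assumes g: "integrable M g" "sets M = sets borel" and wz: "0 < Im w" "0 < Im z" "w \<noteq> z"
  shows "(cauchy_integral M g w - cauchy_integral M g z) / (w - z)
           - (LINT t|M. - complex_of_real (g t) / (z - complex_of_real t) ^ 2)
         = (LINT t|M. complex_of_real (g t) * (w - z) / ((w - t) * (z - t) ^ 2))"
proof -
  have "(cauchy_integral M g w - cauchy_integral M g z) / (w - z)
          - (LINT t|M. - complex_of_real (g t) / (z - complex_of_real t) ^ 2)
        = (LINT t|M. (complex_of_real (g t) / (w - t) - complex_of_real (g t) / (z - t)) / (w - z)
                     - (- complex_of_real (g t) / (z - t) ^ 2))"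
    using integrable_cauchy_kernel[OF g wz(1), of 1] integrable_cauchy_kernel[OF g wz(2), of 1]
      integrable_cauchy_kernel[OF g wz(2), of 2]
    by (simp add: cauchy_integral_def integral_diff)
  also have "\<dots> = (LINT t|M. complex_of_real (g t) * (w - z) / ((w - t) * (z - t) ^ 2))"
  proof -
    have "w - complex_of_real t \<noteq> 0" "z - complex_of_real t \<noteq> 0" for t
      using wz Im_le_norm_diff_of_real[of w t] Im_le_norm_diff_of_real[of z t] by auto
    with wz(3) show ?thesis
      by (intro Bochner_Integration.integral_cong refl cauchy_kernel_diff_quotient_remainder)
  qed
  finally show ?thesis .
qed

lemma cauchy_integral_diff_quotient_bound:
  fixes g :: "real \<Rightarrow> real"
  assumes g: "integrable M g" "sets M = sets borel"
    and z: "0 < Im z" and w: "w \<noteq> z" "norm (w - z) < Im z / 2"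
  shows "norm ((cauchy_integral M g w - cauchy_integral M g z) / (w - z)
               - (LINT t|M. - complex_of_real (g t) / (z - complex_of_real t) ^ 2))
         \<le> norm (w - z) * ((LINT t|M. \<bar>g t\<bar>) * 2 / Im z ^ 3)"
proof -
  define b where "b = Im z"
  define R where "R = (\<lambda>t. complex_of_real (g t) * (w - z) / ((w - t) * (z - t) ^ 2))"
  have b: "0 < b" using z b_def by simp
  have "b / 2 < Im w"
    using w(2) abs_Im_le_cmod[of "w - z"] unfolding b_def by auto
  have bound_R: "norm (R t) \<le> \<bar>g t\<bar> * (norm (w - z) * 2 / b ^ 3)" for t
  proof -
    have "norm (R t) = \<bar>g t\<bar> * norm (w - z) / (norm (w - t) * norm (z - t) ^ 2)"
      unfolding R_def by (simp add: norm_divide norm_mult norm_power)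
    also have "\<dots> \<le> \<bar>g t\<bar> * norm (w - z) / (b / 2 * b ^ 2)"
      using \<open>b / 2 < Im w\<close> Im_le_norm_diff_of_real[of w t] Im_le_norm_diff_of_real[of z t] b
      unfolding b_def by (intro divide_left_mono mult_mono power_mono) (auto intro!: mult_pos_pos)
    finally show ?thesis using b by (simp add: field_simps power3_eq_cube power2_eq_square)
  qed
  have "(\<lambda>t::real. t) \<in> borel_measurable M" using g(2) measurable_cong_sets by fastforce
  then have "R \<in> borel_measurable M" unfolding R_def using g(1) by measurable
  then have "norm (LINT t|M. R t) \<le> (LINT t|M. \<bar>g t\<bar> * (norm (w - z) * 2 / b ^ 3))"
    using g bound_R
    by (intro Bochner_Integration.integral_norm_bound_integral integrable_bound_mult[OF g(1) _ bound_R])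
       auto
  also have "\<dots> = norm (w - z) * ((LINT t|M. \<bar>g t\<bar>) * 2 / b ^ 3)"
    unfolding integral_mult_left_zero by (simp add: field_simps)
  finally show ?thesis
    using cauchy_integral_diff_quotient_eq[OF g _ z w(1)] \<open>b / 2 < Im w\<close> b
    unfolding R_def b_def by simp
qed

lemma has_field_derivative_cauchy_integral:
  fixes g :: "real \<Rightarrow> real"
  assumes g: "integrable M g" "sets M = sets borel" and z: "0 < Im z"
  shows "(cauchy_integral M g has_field_derivative
           (LINT t|M. - complex_of_real (g t) / (z - complex_of_real t) ^ 2)) (at z)"
proof -
  define D where "D = (LINT t|M. - complex_of_real (g t) / (z - complex_of_real t) ^ 2)"
  define C where "C = (LINT t|M. \<bar>g t\<bar>) * 2 / Im z ^ 3"
  have "norm ((cauchy_integral M g w - cauchy_integral M g z) / (w - z) - D) \<le> norm (w - z) * C"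
    if "w \<noteq> z" "dist w z < Im z / 2" for w
    using cauchy_integral_diff_quotient_bound[OF g z that(1)] that(2)
    by (simp add: dist_norm D_def C_def)
  then have "\<forall>\<^sub>F w in at z. norm ((cauchy_integral M g w - cauchy_integral M g z) / (w - z) - D)
                       \<le> norm (w - z) * C"
    unfolding eventually_at using z by (intro exI[of _ "Im z / 2"]) auto
  moreover have "((\<lambda>w. norm (w - z) * C) \<longlongrightarrow> 0) (at z)"
    by (auto intro!: tendsto_eq_intros)
  ultimately have "((\<lambda>w. (cauchy_integral M g w - cauchy_integral M g z) / (w - z) - D) \<longlongrightarrow> 0) (at z)"
    by (rule Lim_null_comparison)
  then show ?thesis
    unfolding D_def[symmetric] has_field_derivative_iff by (rule LIM_zero_cancel)
qed

lemma holomorphic_cauchy_integral: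
  assumes "integrable M g" "sets M = sets borel"
  shows "cauchy_integral M g holomorphic_on {z. 0 < Im z}"
  using has_field_derivative_cauchy_integral[OF assms]
  by (auto simp: holomorphic_on_def field_differentiable_def intro: has_field_derivative_at_within)

lemma holomorphic_cauchy_transform:
  assumes "prob_space \<mu>" "sets \<mu> = sets borel"
  shows "cauchy_transform \<mu> holomorphic_on {z. 0 < Im z}"
  unfolding cauchy_transform_eq_cauchy_integral
  using assms by (intro holomorphic_cauchy_integral finite_measure.integrable_const prob_space.finite_measure)

lemma integral_pos_if_AE_pos:
  fixes f :: "'a \<Rightarrow> real"
  assumes "integrable M f" "AE t in M. 0 < f t" and M: "emeasure M (space M) \<noteq> 0"
  shows "0 < integral\<^sup>L M f"
proof -
  have "AE t in M. 0 \<le> f t" using assms(2) by eventually_elim simp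
  moreover have "\<not> (AE t in M. f t = 0)"
  proof
    assume "AE t in M. f t = 0"
    with assms(2) have "AE t in M. False" by eventually_elim simp
    with M show False by (simp add: eventually_False ae_filter_eq_bot_iff)
  qed
  ultimately have "integral\<^sup>L M f \<noteq> 0" and "0 \<le> integral\<^sup>L M f"
    using integral_nonneg_eq_0_iff_AE[OF assms(1)] integral_nonneg_AE by auto
  then show ?thesis by simp
qed

lemma abs_le_1_plus_square: "\<bar>t\<bar> \<le> 1 + (t::real)\<^sup>2"
proof -
  have "0 \<le> (\<bar>t\<bar> - 1 / 2)\<^sup>2" by simp
  then show ?thesis by (simp add: power2_eq_square algebra_simps)
qed

lemma integrable_lborel_inverse_1_plus_square: "integrable lborel (\<lambda>t::real. 1 / (1 + t\<^sup>2))"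
  using integrable_inverse_1_plus_square
  by (simp add: set_integrable_def einterval_def inverse_eq_divide)

lemma kernel_pos: "kernel_hyps k \<Longrightarrow> t \<noteq> 0 \<Longrightarrow> 0 < k t"
  by (simp add: kernel_hyps_def)

lemma kernel_mono_neg: "kernel_hyps k \<Longrightarrow> s \<le> t \<Longrightarrow> t < 0 \<Longrightarrow> k s \<le> k t"
  unfolding kernel_hyps_def monotone_on_def by auto

lemma kernel_antimono_pos: "kernel_hyps k \<Longrightarrow> 0 < s \<Longrightarrow> s \<le> t \<Longrightarrow> k t \<le> k s"
  unfolding kernel_hyps_def monotone_on_def by auto

lemma kernel_decay:
  assumes "kernel_hyps k"
  obtains B where "\<And>t. t \<noteq> 0 \<Longrightarrow> (1 + t\<^sup>2) ^ 2 * k t \<le> B"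
proof -
  have "\<forall>m n. m \<le> 2 \<longrightarrow> n \<le> 2 \<longrightarrow> (\<exists>B. \<forall>t. t \<noteq> 0 \<longrightarrow> \<bar>(1 + t\<^sup>2) ^ m * (deriv ^^ n) k t\<bar> \<le> B)"
    using assms unfolding kernel_hyps_def by blast
  then obtain B where "\<And>t. t \<noteq> 0 \<Longrightarrow> \<bar>(1 + t\<^sup>2) ^ 2 * k t\<bar> \<le> B"
    by (metis funpow_0 order_refl zero_le_numeral)
  then show ?thesis using that abs_ge_self order_trans by blast
qed

lemma borel_measurable_kernel: "kernel_hyps k \<Longrightarrow> k \<in> borel_measurable borel"
  unfolding kernel_hyps_def
  by (rule borel_measurable_continuous_countable_exceptions[of "{0}"])
     (auto intro!: continuous_at_imp_continuous_on differentiable_imp_continuous_within)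

lemma integrable_kernel_mult:
  assumes k: "kernel_hyps k" and w: "w \<in> borel_measurable borel" "\<And>t. \<bar>w t\<bar> \<le> 1 + t\<^sup>2"
  shows "integrable lborel (\<lambda>t. w t * k t)"
proof -
  obtain B where B: "\<And>t. t \<noteq> 0 \<Longrightarrow> (1 + t\<^sup>2) ^ 2 * k t \<le> B"
    using kernel_decay[OF k] by blast
  have "norm (w t * k t) \<le> norm (B * (1 / (1 + t\<^sup>2)))" if "t \<noteq> 0" for t
  proof -
    have pos: "0 < 1 + t\<^sup>2" by (simp add: add_pos_nonneg)
    have "\<bar>w t\<bar> * k t * (1 + t\<^sup>2) \<le> (1 + t\<^sup>2) ^ 2 * k t"
      using w(2)[of t] kernel_pos[OF k that] pos
      by (simp add: power2_eq_square mult_right_mono)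
    also have "\<dots> \<le> B" using B[OF that] .
    finally have "\<bar>w t\<bar> * k t \<le> B / (1 + t\<^sup>2)" using pos by (simp add: field_simps)
    also have "\<dots> \<le> \<bar>B\<bar> / (1 + t\<^sup>2)" using pos by (simp add: divide_right_mono)
    finally show ?thesis using kernel_pos[OF k that] by (simp add: abs_mult)
  qed
  then have "AE t in lborel. norm (w t * k t) \<le> norm (B * (1 / (1 + t\<^sup>2)))"
    by (rule eventually_mono[OF AE_lborel_singleton[of 0]])
  moreover have "(\<lambda>t. w t * k t) \<in> borel_measurable lborel"
    using w(1) borel_measurable_kernel[OF k] by simp
  ultimately show ?thesis
    by (intro Bochner_Integration.integrable_bound[OF
          integrable_mult_right[OF integrable_lborel_inverse_1_plus_square]])
qed

lemma integrable_sgn_kernel: "kernel_hyps k \<Longrightarrow> integrable lborel (\<lambda>t. sgn t * k t)"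
  by (rule integrable_kernel_mult) (auto intro: order_trans[OF _ add_increasing2])

lemma integrable_abs_kernel: "kernel_hyps k \<Longrightarrow> integrable lborel (\<lambda>t. \<bar>t\<bar> * k t)"
  by (rule integrable_kernel_mult) (auto intro: abs_le_1_plus_square)

lemma abs_mult_kernel_nonneg: "kernel_hyps k \<Longrightarrow> 0 \<le> \<bar>t\<bar> * k t"
  using kernel_pos[of k t] by (cases "t = 0") auto

lemma integrable_F_k_integrand:
  assumes k: "kernel_hyps k" and y: "0 < y"
  shows "integrable lborel (\<lambda>t. \<bar>t\<bar> * k t / ((x - t)\<^sup>2 + y\<^sup>2))"
proof (rule Bochner_Integration.integrable_bound)
  show "integrable lborel (\<lambda>t. \<bar>t\<bar> * k t / y\<^sup>2)" using integrable_abs_kernel[OF k] by simp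
  show "(\<lambda>t. \<bar>t\<bar> * k t / ((x - t)\<^sup>2 + y\<^sup>2)) \<in> borel_measurable lborel"
    using borel_measurable_kernel[OF k] by measurable
  show "AE t in lborel. norm (\<bar>t\<bar> * k t / ((x - t)\<^sup>2 + y\<^sup>2)) \<le> norm (\<bar>t\<bar> * k t / y\<^sup>2)"
    using abs_mult_kernel_nonneg[OF k] y
    by (intro AE_I2) (simp add: divide_left_mono add_nonneg_pos)
qed

lemma F_k_le:
  assumes k: "kernel_hyps k" and y: "0 < y"
  shows "F_k k x y \<le> (LINT t|lborel. \<bar>t\<bar> * k t) / y\<^sup>2"
proof -
  have "F_k k x y \<le> (LINT t|lborel. \<bar>t\<bar> * k t / y\<^sup>2)"
    unfolding F_k_def
    using integrable_F_k_integrand[OF k y] integrable_abs_kernel[OF k] abs_mult_kernel_nonneg[OF k] y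
    by (intro integral_mono) (auto simp: divide_left_mono add_nonneg_pos)
  then show ?thesis by simp
qed

lemma F_k_strict_antimono:
  assumes k: "kernel_hyps k" and y: "0 < y1" "y1 < y2"
  shows "F_k k x y2 < F_k k x y1"
proof -
  define f where "f = (\<lambda>t. \<bar>t\<bar> * k t / ((x - t)\<^sup>2 + y1\<^sup>2) - \<bar>t\<bar> * k t / ((x - t)\<^sup>2 + y2\<^sup>2))"
  have "0 < f t" if "t \<noteq> 0" for t
  proof -
    have "y1\<^sup>2 < y2\<^sup>2" using y by (simp add: power_strict_mono)
    moreover have "0 < \<bar>t\<bar> * k t" using kernel_pos[OF k that] that by simp
    ultimately show ?thesis
      unfolding f_def using y by (simp add: divide_strict_left_mono add_nonneg_pos)
  qed
  then have "AE t in lborel. 0 < f t"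
    by (rule eventually_mono[OF AE_lborel_singleton[of 0]])
  moreover have "integrable lborel f"
    unfolding f_def using integrable_F_k_integrand[OF k] y by simp
  ultimately have "0 < integral\<^sup>L lborel f"
    by (intro integral_pos_if_AE_pos) simp_all
  then show ?thesis
    unfolding f_def F_k_def using integrable_F_k_integrand[OF k] y by simp
qed

lemma holomorphic_H_k: "kernel_hyps k \<Longrightarrow> H_k k holomorphic_on {z. 0 < Im z}"
  unfolding H_k_eq_cauchy_integral[abs_def]
  by (intro holomorphic_intros holomorphic_cauchy_integral integrable_sgn_kernel) simp_all

lemma Im_mult_cauchy_kernel:
  "Im (z * (complex_of_real c / (z - complex_of_real t))) = - Im z * (c * t / ((Re z - t)\<^sup>2 + (Im z)\<^sup>2))"
  by (cases z) (simp add: Im_divide field_simps power2_eq_square)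

lemma Im_H_k:
  assumes k: "kernel_hyps k" and z: "0 < Im z"
  shows "Im (H_k k z) = Im z * (1 - F_k k (Re z) (Im z))"
proof -
  define f where "f = (\<lambda>t. z * (complex_of_real (sgn t * k t) / (z - complex_of_real t)))"
  have "integrable lborel f"
    unfolding f_def
    by (rule integrable_mult_right) (use integrable_cauchy_kernel[OF integrable_sgn_kernel[OF k] _ z, of 1] in simp)
  moreover have "z * cauchy_integral lborel (\<lambda>t. sgn t * k t) z = (LINT t|lborel. f t)"
    unfolding cauchy_integral_def f_def by (simp only: integral_mult_right_zero)
  ultimately have "Im (z * cauchy_integral lborel (\<lambda>t. sgn t * k t) z) = (LINT t|lborel. Im (f t))"
    by (simp add: integral_Im)
  also have "\<dots> = (LINT t|lborel. - Im z * (\<bar>t\<bar> * k t / ((Re z - t)\<^sup>2 + (Im z)\<^sup>2)))"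
  proof (rule Bochner_Integration.integral_cong[OF refl])
    fix t
    have "sgn t * k t * t = \<bar>t\<bar> * k t" by (cases t "0::real" rule: linorder_cases) auto
    then show "Im (f t) = - Im z * (\<bar>t\<bar> * k t / ((Re z - t)\<^sup>2 + (Im z)\<^sup>2))"
      unfolding f_def Im_mult_cauchy_kernel by simp
  qed
  also have "\<dots> = - Im z * F_k k (Re z) (Im z)"
    by (simp only: F_k_def integral_mult_right_zero)
  finally show ?thesis
    unfolding H_k_eq_cauchy_integral by (simp add: algebra_simps)
qed

text \<open>Continuity of \<open>F\<^sub>k\<close> in \<open>y\<close> is inherited from the holomorphy of \<open>H\<^sub>k\<close>.\<close>

lemma continuous_on_F_k:
  assumes k: "kernel_hyps k"
  shows "continuous_on {0<..} (F_k k x)"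
proof -
  have "continuous_on {0<..} (\<lambda>y. H_k k (Complex x y))"
    using holomorphic_on_imp_continuous_on[OF holomorphic_H_k[OF k]]
    by (rule continuous_on_compose2) (auto simp: Complex_eq intro!: continuous_intros)
  then have "continuous_on {0<..} (\<lambda>y. 1 - Im (H_k k (Complex x y)) / y)"
    by (intro continuous_intros) auto
  moreover have "F_k k x y = 1 - Im (H_k k (Complex x y)) / y" if "0 < y" for y
    using Im_H_k[OF k, of "Complex x y"] that by (simp add: field_simps)
  ultimately show ?thesis
    using continuous_on_cong[of "{0<..}" "{0<..}" "F_k k x" "\<lambda>y. 1 - Im (H_k k (Complex x y)) / y"]
    by simp
qed

lemma integral_abs_over_square_plus:
  fixes x y a :: real
  assumes y: "0 < y" and a: "a \<in> {x - 1, x}"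
  shows "(LBINT t:{a..a+1}. \<bar>t - x\<bar> / ((t - x)\<^sup>2 + y\<^sup>2)) = (ln (1 + y\<^sup>2) - ln (y\<^sup>2)) / 2"
proof -
  define s :: real where "s = (if a = x then 1 else -1)"
  have pos: "0 < (t - x)\<^sup>2 + y\<^sup>2" for t using y by (simp add: add_nonneg_pos)
  then have nz: "(t - x)\<^sup>2 + y\<^sup>2 \<noteq> 0" for t by (metis less_irrefl)
  have "(LBINT t:{a..a+1}. \<bar>t - x\<bar> / ((t - x)\<^sup>2 + y\<^sup>2)) = (LBINT t=a..a+1. s * (t - x) / ((t - x)\<^sup>2 + y\<^sup>2))"
    unfolding interval_integral_Icc[OF less_imp_le[OF less_add_one]]
    by (rule set_lebesgue_integral_cong) (use a in \<open>auto simp: s_def\<close>)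
  also have "\<dots> = s * ln ((a + 1 - x)\<^sup>2 + y\<^sup>2) / 2 - s * ln ((a - x)\<^sup>2 + y\<^sup>2) / 2"
  proof (rule interval_integral_FTC_finite)
    show "continuous_on {min a (a + 1)..max a (a + 1)} (\<lambda>t. s * (t - x) / ((t - x)\<^sup>2 + y\<^sup>2))"
      by (intro continuous_intros) (use nz in blast)
    fix t
    have "((\<lambda>t. s * ln ((t - x)\<^sup>2 + y\<^sup>2) / 2) has_real_derivative s * (t - x) / ((t - x)\<^sup>2 + y\<^sup>2)) (at t)"
      using pos[of t] by (auto intro!: derivative_eq_intros simp: field_simps power2_eq_square)
    then show "((\<lambda>t. s * ln ((t - x)\<^sup>2 + y\<^sup>2) / 2) has_vector_derivative s * (t - x) / ((t - x)\<^sup>2 + y\<^sup>2))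
                 (at t within {min a (a + 1)..max a (a + 1)})"
      by (simp add: has_real_derivative_iff_has_vector_derivative has_vector_derivative_at_within)
  qed
  finally show ?thesis using a y by (auto simp: s_def diff_divide_distrib)
qed

lemma kernel_linear_lower_bound:
  assumes k: "kernel_hyps k"
  shows "\<exists>a c. 0 < c \<and> a \<in> {x - 1, x} \<and> (\<forall>t \<in> {a..a+1}. c * \<bar>t - x\<bar> \<le> \<bar>t\<bar> * k t)"
proof (cases "0 \<le> x")
  case True
  have "k (x + 1) * \<bar>t - x\<bar> \<le> \<bar>t\<bar> * k t" if "t \<in> {x..x+1}" for t
  proof (cases "t = 0")
    case False
    with True that have "k (x + 1) \<le> k t" by (intro kernel_antimono_pos[OF k]) auto
    moreover have "\<bar>t - x\<bar> \<le> \<bar>t\<bar>" using True that by auto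
    ultimately show ?thesis
      using kernel_pos[OF k, of "x + 1"] True mult_mono[of "k (x + 1)" "k t" "\<bar>t - x\<bar>" "\<bar>t\<bar>"]
      by (simp add: mult.commute)
  qed (use True that in auto)
  with kernel_pos[OF k, of "x + 1"] True show ?thesis by (intro exI[of _ x] exI[of _ "k (x + 1)"]) auto
next
  case False
  have "k (x - 1) * \<bar>t - x\<bar> \<le> \<bar>t\<bar> * k t" if "t \<in> {x - 1..x}" for t
  proof -
    from False that have "k (x - 1) \<le> k t" by (intro kernel_mono_neg[OF k]) auto
    moreover have "\<bar>t - x\<bar> \<le> \<bar>t\<bar>" using False that by auto
    ultimately show ?thesis
      using kernel_pos[OF k, of t] False that mult_mono[of "k (x - 1)" "k t" "\<bar>t - x\<bar>" "\<bar>t\<bar>"]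
      by (simp add: mult.commute)
  qed
  with kernel_pos[OF k, of "x - 1"] False show ?thesis
    by (intro exI[of _ "x - 1"] exI[of _ "k (x - 1)"]) auto
qed

text \<open>The integrand of \<open>F\<^sub>k(x + i y)\<close> dominates \<open>c |t - x| / ((t - x)\<^sup>2 + y\<^sup>2)\<close> on a unit interval
  next to \<open>x\<close>, whose integral grows like \<open>-c ln y\<close> as \<open>y \<rightarrow> 0\<close>.\<close>

lemma F_k_ge_one_somewhere:
  assumes k: "kernel_hyps k"
  shows "\<exists>y>0. 1 \<le> F_k k x y"
proof -
  obtain a c where c: "0 < c" and a: "a \<in> {x - 1, x}"
    and lower: "\<And>t. t \<in> {a..a+1} \<Longrightarrow> c * \<bar>t - x\<bar> \<le> \<bar>t\<bar> * k t"
    using kernel_linear_lower_bound[OF k, of x] by blast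
  define y where "y = exp (- 1 / c)"
  have y: "0 < y" by (simp add: y_def)
  have "ln (y\<^sup>2) = - 2 / c" by (simp add: y_def power2_eq_square exp_add[symmetric])
  then have "1 \<le> c * ((ln (1 + y\<^sup>2) - ln (y\<^sup>2)) / 2)"
    using c by (simp add: field_simps)
  also have "\<dots> = (LBINT t:{a..a+1}. c * (\<bar>t - x\<bar> / ((t - x)\<^sup>2 + y\<^sup>2)))"
    unfolding set_integral_mult_right integral_abs_over_square_plus[OF y a] ..
  also have "\<dots> \<le> F_k k x y"
    unfolding F_k_def set_lebesgue_integral_def
  proof (rule integral_mono)
    have "(t - x)\<^sup>2 + y\<^sup>2 \<noteq> 0" for t
      using y by (metis add_nonneg_pos less_irrefl zero_le_power2 zero_less_power)
    then have "continuous_on {a..a+1} (\<lambda>t. c * (\<bar>t - x\<bar> / ((t - x)\<^sup>2 + y\<^sup>2)))"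
      by (intro continuous_intros) simp
    from borel_integrable_atLeastAtMost'[OF this]
    show "integrable lborel (\<lambda>t. indicator {a..a+1} t *\<^sub>R (c * (\<bar>t - x\<bar> / ((t - x)\<^sup>2 + y\<^sup>2))))"
      unfolding set_integrable_def .
    show "integrable lborel (\<lambda>t. \<bar>t\<bar> * k t / ((x - t)\<^sup>2 + y\<^sup>2))"
      by (rule integrable_F_k_integrand[OF k y])
    fix t
    show "indicator {a..a+1} t *\<^sub>R (c * (\<bar>t - x\<bar> / ((t - x)\<^sup>2 + y\<^sup>2))) \<le> \<bar>t\<bar> * k t / ((x - t)\<^sup>2 + y\<^sup>2)"
      using lower[of t] abs_mult_kernel_nonneg[OF k, of t] y
      by (auto simp: indicator_def divide_right_mono add_nonneg_pos power2_commute)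
  qed
  finally show ?thesis using y by blast
qed

lemma F_k_less_one_high:
  assumes k: "kernel_hyps k"
  shows "\<exists>Y>0. \<forall>x y. Y < y \<longrightarrow> F_k k x y < 1"
proof -
  define C where "C = (LINT t|lborel. \<bar>t\<bar> * k t)"
  have C: "0 \<le> C"
    unfolding C_def using abs_mult_kernel_nonneg[OF k] by (intro integral_nonneg_AE AE_I2) auto
  have "F_k k x y < 1" if "sqrt C + 1 < y" for x y
  proof -
    have "sqrt C < y" "0 < y" using that C by (auto intro: order_le_less_trans[OF real_sqrt_ge_zero])
    then have "(sqrt C)\<^sup>2 < y\<^sup>2" using C by (intro power_strict_mono) auto
    then have "C / y\<^sup>2 < 1" using C \<open>0 < y\<close> by (simp add: divide_less_eq)
    with F_k_le[OF k \<open>0 < y\<close>, of x] show ?thesis unfolding C_def by linarith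
  qed
  moreover have "0 < sqrt C + 1" using real_sqrt_ge_zero[OF C] by linarith
  ultimately show ?thesis by blast
qed

lemma v_k:
  assumes k: "kernel_hyps k"
  shows "0 < v_k k x" "F_k k x (v_k k x) = 1"
proof -
  obtain y0 where y0: "0 < y0" "1 \<le> F_k k x y0" using F_k_ge_one_somewhere[OF k] by blast
  obtain Y where Y: "\<And>y. Y < y \<Longrightarrow> F_k k x y < 1"
    using F_k_less_one_high[OF k] by blast
  define y1 where "y1 = max y0 Y + 1"
  have "y0 \<le> y1" "Y < y1" unfolding y1_def by linarith+
  then have Fy1: "F_k k x y1 \<le> 1" using Y by (simp add: less_imp_le)
  have "continuous_on {y0..y1} (F_k k x)"
    by (rule continuous_on_subset[OF continuous_on_F_k[OF k]]) (use y0(1) in auto)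
  then obtain y where y: "y0 \<le> y" "F_k k x y = 1"
    using IVT2'[of "F_k k x" y1 1 y0, OF Fy1 y0(2) \<open>y0 \<le> y1\<close>] by blast
  have unique: "y' = y" if y': "0 < y'" "F_k k x y' = 1" for y'
  proof (rule ccontr)
    assume "y' \<noteq> y"
    then consider "y' < y" | "y < y'" by linarith
    then show False
    proof cases
      case 1
      then show False using F_k_strict_antimono[OF k y'(1) 1, of x] y' y by simp
    next
      case 2
      from y0(1) y(1) have "0 < y" by simp
      then show False using F_k_strict_antimono[OF k _ 2, of x] y' y by simp
    qed
  qed
  have "\<exists>!y. 0 < y \<and> F_k k x y = 1"
    using y y0(1) unique by (intro ex1I[of _ y]) auto
  from theI'[OF this] show "0 < v_k k x" "F_k k x (v_k k x) = 1"
    unfolding v_k_def by auto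
qed

lemma free_cumulant_integrand_eq:
  fixes z :: complex and t c i :: real
  assumes z: "0 < Im z"
  shows "(1 / (1 - complex_of_real t * (1 / z)) - 1 - complex_of_real t * (1 / z) * complex_of_real i)
           * complex_of_real (c / \<bar>t\<bar>)
         = complex_of_real (sgn t * c) / (z - complex_of_real t) - 1 / z * complex_of_real (i * (sgn t * c))"
proof (cases "t = 0")
  case False
  let ?T = "complex_of_real t" and ?C = "complex_of_real (c / \<bar>t\<bar>)"
  have "z \<noteq> 0" "z - ?T \<noteq> 0" using z by auto
  then have geom: "1 / (1 - ?T * (1 / z)) - 1 = ?T / (z - ?T)"
    by (simp add: field_simps)
  have "?C * ?T = complex_of_real (sgn t * c)"
    using False by (cases "0 < t") (auto simp: field_simps)
  moreover have "(1 / (1 - ?T * (1 / z)) - 1 - ?T * (1 / z) * complex_of_real i) * ?C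
      = ?C * ?T / (z - ?T) - 1 / z * complex_of_real i * (?C * ?T)"
    unfolding geom by (simp add: algebra_simps)
  ultimately show ?thesis by (simp only: of_real_mult mult.assoc)
qed simp

text \<open>The drift of the triplet cancels the truncation term of the Levy integral, leaving exactly
  the Cauchy integral that appears in \<open>H\<^sub>k\<close>.\<close>

lemma free_cumulant_formula_inverse:
  assumes k: "kernel_hyps k" and z: "0 < Im z"
  shows "free_cumulant_formula k (1 / z) = cauchy_integral lborel (\<lambda>t. sgn t * k t) z"
proof -
  define g where "g = (\<lambda>t. indicator {-1..1} t * (sgn t * k t))"
  have "integrable lborel g"
    unfolding g_def using integrable_mult_indicator[OF _ integrable_sgn_kernel[OF k], of "{-1..1}"]
    by simp
  then have "integrable lborel (\<lambda>t. 1 / z * complex_of_real (g t))"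
    by (intro integrable_mult_right) (simp only: complex_of_real_integrable_eq)
  moreover have "integrable lborel (\<lambda>t. complex_of_real (sgn t * k t) / (z - complex_of_real t))"
    using integrable_cauchy_kernel[OF integrable_sgn_kernel[OF k] _ z, of 1] by simp
  ultimately have "(LINT t|lborel. (1 / (1 - complex_of_real t * (1 / z)) - 1
                         - complex_of_real t * (1 / z) * complex_of_real (indicator {-1..1} t))
                        * complex_of_real (k t / \<bar>t\<bar>))
      = cauchy_integral lborel (\<lambda>t. sgn t * k t) z - 1 / z * complex_of_real (LINT t|lborel. g t)"
    unfolding free_cumulant_integrand_eq[OF z] g_def cauchy_integral_def
    by (simp only: Bochner_Integration.integral_diff integral_mult_right_zero integral_complex_of_real)
  moreover have "(LINT t|lborel. g t) = (LINT t:{-1..1}|lborel. sgn t * k t)"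
    unfolding g_def set_lebesgue_integral_def by simp
  ultimately show ?thesis unfolding free_cumulant_formula_def by simp
qed

lemma cauchy_transform_H_k_trunc_cone:
  assumes k: "kernel_hyps k" and nu: "is_nu_k k \<mu>"
  shows "\<exists>\<eta> M. 0 < \<eta> \<and> 0 < M \<and> (\<forall>z \<in> trunc_cone \<eta> M. cauchy_transform \<mu> (H_k k z) = 1 / z)"
proof -
  obtain \<alpha> \<beta> \<eta> M Ginv where pos: "0 < \<eta>" "0 < M" and
    Ginv: "\<And>w. w \<noteq> 0 \<Longrightarrow> 1 / w \<in> trunc_cone \<eta> M \<Longrightarrow>
           cauchy_transform \<mu> (Ginv w) = w \<and> w * Ginv w - 1 = free_cumulant_formula k w"
    using nu unfolding is_nu_k_def by blast
  have "cauchy_transform \<mu> (H_k k z) = 1 / z" if z: "z \<in> trunc_cone \<eta> M" for z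
  proof -
    have "0 < Im z" using z pos unfolding trunc_cone_def by auto
    then have "z \<noteq> 0" by auto
    with z have G: "cauchy_transform \<mu> (Ginv (1 / z)) = 1 / z"
      and cumulant: "1 / z * Ginv (1 / z) - 1 = cauchy_integral lborel (\<lambda>t. sgn t * k t) z"
      using Ginv[of "1 / z"] free_cumulant_formula_inverse[OF k \<open>0 < Im z\<close>] by auto
    have "Ginv (1 / z) = z * (1 / z * Ginv (1 / z))" using \<open>z \<noteq> 0\<close> by simp
    also have "\<dots> = H_k k z"
      unfolding H_k_eq_cauchy_integral cumulant[symmetric] by (simp add: algebra_simps)
    finally show ?thesis using G by simp
  qed
  with pos show ?thesis by blast
qed

definition Omega_k :: "(real \<Rightarrow> real) \<Rightarrow> complex set" where
  "Omega_k k = {z. 0 < Im z \<and> 0 < Im (H_k k z)}"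

lemma Omega_k_iff:
  assumes "kernel_hyps k" "0 < Im z"
  shows "z \<in> Omega_k k \<longleftrightarrow> F_k k (Re z) (Im z) < 1"
  using Im_H_k[OF assms] assms(2) unfolding Omega_k_def by (simp add: zero_less_mult_iff)

lemma open_Omega_k:
  assumes k: "kernel_hyps k"
  shows "open (Omega_k k)"
proof -
  have "open ({z. 0 < Im z} \<inter> H_k k -` {w. 0 < Im w})"
    using holomorphic_on_imp_continuous_on[OF holomorphic_H_k[OF k]]
    by (rule continuous_open_preimage) (auto intro: open_halfspace_Im_gt)
  moreover have "{z. 0 < Im z} \<inter> H_k k -` {w. 0 < Im w} = Omega_k k"
    unfolding Omega_k_def by auto
  ultimately show ?thesis by simp
qed

lemma Omega_k_vertically_closed:
  assumes k: "kernel_hyps k" and z: "z \<in> Omega_k k" and s: "0 \<le> s"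
  shows "z + \<i> * complex_of_real s \<in> Omega_k k"
proof -
  have Im: "0 < Im z" using z unfolding Omega_k_def by simp
  have "F_k k (Re z) (Im z + s) \<le> F_k k (Re z) (Im z)"
    using F_k_strict_antimono[OF k Im, of "Im z + s" "Re z"] s by (cases "s = 0") auto
  moreover have "F_k k (Re z) (Im z) < 1" using Omega_k_iff[OF k Im] z by simp
  ultimately show ?thesis using Omega_k_iff[OF k, of "z + \<i> * complex_of_real s"] Im s by simp
qed

lemma half_plane_subset_Omega_k:
  assumes k: "kernel_hyps k"
  shows "\<exists>Y>0. {z. Y < Im z} \<subseteq> Omega_k k"
proof -
  obtain Y where Y: "0 < Y" "\<And>x y. Y < y \<Longrightarrow> F_k k x y < 1"
    using F_k_less_one_high[OF k] by blast
  then have "{z. Y < Im z} \<subseteq> Omega_k k" using Omega_k_iff[OF k] by auto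
  with Y(1) show ?thesis by blast
qed

lemma connected_if_vertically_closed:
  fixes S :: "complex set"
  assumes up: "\<And>z s. z \<in> S \<Longrightarrow> 0 \<le> s \<Longrightarrow> z + \<i> * complex_of_real s \<in> S"
    and half: "{z. Y < Im z} \<subseteq> S"
  shows "connected S"
proof -
  define U where "U = {z. Y < Im z}"
  define top where "top = (\<lambda>z. z + \<i> * complex_of_real (\<bar>Im z\<bar> + \<bar>Y\<bar> + 1))"
  define A where "A = (\<lambda>z. closed_segment z (top z) \<union> U) ` S"
  have "closed_segment z (top z) \<subseteq> S" if "z \<in> S" for z
  proof
    fix w assume "w \<in> closed_segment z (top z)"
    then obtain u where u: "0 \<le> u" "w = z + \<i> * complex_of_real (u * (\<bar>Im z\<bar> + \<bar>Y\<bar> + 1))"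
      unfolding in_segment top_def by (auto simp: algebra_simps scaleR_conv_of_real)
    then show "w \<in> S" using up[OF that, of "u * (\<bar>Im z\<bar> + \<bar>Y\<bar> + 1)"] by simp
  qed
  then have "S = \<Union>A" using half unfolding A_def U_def by auto
  moreover have "connected (\<Union>A)"
  proof (rule connected_Union)
    fix T assume "T \<in> A"
    then obtain z where T: "T = closed_segment z (top z) \<union> U" unfolding A_def by auto
    have "top z \<in> closed_segment z (top z) \<inter> U" unfolding top_def U_def by auto
    then show "connected T"
      unfolding T U_def by (intro connected_Un convex_connected convex_halfspace_Im_gt) auto
  next
    have "\<i> * complex_of_real (\<bar>Y\<bar> + 1) \<in> \<Inter>A" unfolding A_def U_def by auto
    then show "\<Inter>A \<noteq> {}" by auto
  qed
  ultimately show ?thesis by simp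
qed

lemma connected_Omega_k: "kernel_hyps k \<Longrightarrow> connected (Omega_k k)"
  using half_plane_subset_Omega_k Omega_k_vertically_closed
  by (metis connected_if_vertically_closed)

lemma cauchy_transform_H_k_Omega_k:
  assumes k: "kernel_hyps k" and nu: "is_nu_k k \<mu>" and z: "z \<in> Omega_k k"
  shows "cauchy_transform \<mu> (H_k k z) = 1 / z"
proof -
  obtain \<eta> M where pos: "0 < \<eta>" "0 < M"
    and cone: "\<And>z. z \<in> trunc_cone \<eta> M \<Longrightarrow> cauchy_transform \<mu> (H_k k z) = 1 / z"
    using cauchy_transform_H_k_trunc_cone[OF k nu] by blast
  obtain Y where Y: "0 < Y" "{z. Y < Im z} \<subseteq> Omega_k k"
    using half_plane_subset_Omega_k[OF k] by blast
  have Omega_upper: "Omega_k k \<subseteq> {z. 0 < Im z}" unfolding Omega_k_def by auto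
  have "H_k k ` Omega_k k \<subseteq> {z. 0 < Im z}" unfolding Omega_k_def by auto
  then have hol_GH: "(cauchy_transform \<mu> \<circ> H_k k) holomorphic_on Omega_k k"
    using nu holomorphic_on_subset[OF holomorphic_H_k[OF k] Omega_upper]
    by (intro holomorphic_on_compose_gen[where t = "{z. 0 < Im z}"] holomorphic_cauchy_transform)
       (auto simp: is_nu_k_def)
  have hol_inverse: "(\<lambda>z. 1 / z) holomorphic_on Omega_k k"
    using Omega_upper by (intro holomorphic_intros) auto
  define U where "U = trunc_cone \<eta> M \<inter> {z. Y < Im z}"
  have "open U"
    unfolding U_def trunc_cone_def
    by (intro open_Int open_Collect_conj open_Collect_less continuous_intros)
  moreover have "\<i> * complex_of_real (max M Y + 1) \<in> U"
    using pos unfolding U_def trunc_cone_def by auto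
  moreover have "U \<subseteq> Omega_k k" using Y(2) unfolding U_def by auto
  ultimately have "(cauchy_transform \<mu> \<circ> H_k k) z = 1 / z"
    using cone unfolding U_def
    by (intro analytic_continuation_open[OF _ open_Omega_k[OF k] _ connected_Omega_k[OF k] _ hol_GH hol_inverse _ z])
       auto
  then show ?thesis by simp
qed

lemma H_k_not_constant:
  assumes k: "kernel_hyps k" and nu: "is_nu_k k \<mu>"
  shows "\<not> H_k k constant_on {z. 0 < Im z}"
proof
  assume "H_k k constant_on {z. 0 < Im z}"
  then obtain c where c: "\<And>z. 0 < Im z \<Longrightarrow> H_k k z = c" unfolding constant_on_def by auto
  obtain Y where Y: "0 < Y" "{z. Y < Im z} \<subseteq> Omega_k k"
    using half_plane_subset_Omega_k[OF k] by blast
  define z1 z2 where "z1 = \<i> * complex_of_real (Y + 1)" and "z2 = \<i> * complex_of_real (Y + 2)"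
  have z: "z1 \<in> Omega_k k" "z2 \<in> Omega_k k" "0 < Im z1" "0 < Im z2"
    using Y unfolding z1_def z2_def by auto
  have "1 / z1 = cauchy_transform \<mu> c"
    using cauchy_transform_H_k_Omega_k[OF k nu z(1)] c[OF z(3)] by simp
  moreover have "1 / z2 = cauchy_transform \<mu> c"
    using cauchy_transform_H_k_Omega_k[OF k nu z(2)] c[OF z(4)] by simp
  ultimately have "1 / z1 = 1 / z2" by simp
  then show False unfolding z1_def z2_def by simp
qed

lemma tendsto_at_image_of_nonconstant_holomorphic:
  fixes f g h :: "complex \<Rightarrow> complex"
  assumes f: "f holomorphic_on S" "open S" "connected S" "\<not> f constant_on S"
    and w0: "w0 \<in> S" and h: "isCont h w0"
    and gf: "\<And>w. w \<in> S \<Longrightarrow> f w \<in> T \<Longrightarrow> g (f w) = h w"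
  shows "(g \<longlongrightarrow> h w0) (at (f w0) within T)"
  unfolding Lim_within
proof (intro allI impI)
  fix e :: real assume "0 < e"
  then obtain r where r: "0 < r" "\<And>w. dist w w0 < r \<Longrightarrow> dist (h w) (h w0) < e"
    using h unfolding continuous_at_eps_delta by blast
  obtain r' where r': "0 < r'" "ball w0 r' \<subseteq> S"
    using f(2) w0 open_contains_ball by blast
  define B where "B = ball w0 (min r r')"
  have "open (f ` B)"
    using r' unfolding B_def by (intro open_mapping_thm[OF f(1,2,3) _ _ f(4)]) auto
  moreover have "f w0 \<in> f ` B" using r r' unfolding B_def by simp
  ultimately obtain d where d: "0 < d" "ball (f w0) d \<subseteq> f ` B"
    unfolding open_contains_ball by blast
  have "dist (g z) (h w0) < e" if z: "z \<in> T" "dist z (f w0) < d" for z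
  proof -
    obtain w where "w \<in> B" "z = f w" using d z(2) by (auto simp: dist_commute)
    moreover have "w \<in> S" "dist w w0 < r"
      using \<open>w \<in> B\<close> r' unfolding B_def by (auto simp: dist_commute)
    ultimately show ?thesis using gf z(1) r(2) by simp
  qed
  with d(1) show "\<exists>d>0. \<forall>z\<in>T. 0 < dist z (f w0) \<and> dist z (f w0) < d \<longrightarrow> dist (g z) (h w0) < e"
    by blast
qed

lemma nt_sector_subset_upper_half_plane:
  assumes "Im \<xi> = 0" "0 < \<delta>"
  shows "nt_sector \<xi> \<delta> \<subseteq> {z. 0 < Im z}"
proof
  fix z assume "z \<in> nt_sector \<xi> \<delta>"
  then obtain r \<theta> where "z = \<xi> + complex_of_real r * cis \<theta>" "0 < r" "\<delta> < \<theta>" "\<theta> < pi - \<delta>"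
    unfolding nt_sector_def by blast
  moreover from this have "0 < sin \<theta>" using assms(2) by (intro sin_gt_zero) auto
  ultimately show "z \<in> {z. 0 < Im z}" using assms(1) by simp
qed

theorem proposition3p3:
  fixes k :: "real \<Rightarrow> real" and \<mu> :: "real measure" and x :: real
  assumes "kernel_hyps k"
    and "is_nu_k k \<mu>"
  shows "\<forall>\<delta>. 0 < \<delta> \<and> \<delta> < pi \<longrightarrow>
           (cauchy_transform \<mu> \<longlongrightarrow> 1 / Complex x (v_k k x)) (at (P_k k x) within nt_sector (P_k k x) \<delta>)"
proof (intro allI impI)
  fix \<delta> :: real assume \<delta>: "0 < \<delta> \<and> \<delta> < pi"
  define \<zeta>\<^sub>0 where "\<zeta>\<^sub>0 = Complex x (v_k k x)"
  have \<zeta>\<^sub>0: "0 < Im \<zeta>\<^sub>0" and "P_k k x = H_k k \<zeta>\<^sub>0"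
    using v_k[OF assms(1)] unfolding \<zeta>\<^sub>0_def P_k_def by simp_all
  moreover have "Im (H_k k \<zeta>\<^sub>0) = 0"
    using Im_H_k[OF assms(1) \<zeta>\<^sub>0] v_k[OF assms(1)] unfolding \<zeta>\<^sub>0_def by simp
  moreover have "(cauchy_transform \<mu> \<longlongrightarrow> 1 / \<zeta>\<^sub>0) (at (H_k k \<zeta>\<^sub>0) within {z. 0 < Im z})"
  proof (rule tendsto_at_image_of_nonconstant_holomorphic[where S = "{z. 0 < Im z}" and h = "\<lambda>w. 1 / w"])
    show "cauchy_transform \<mu> (H_k k w) = 1 / w" if "w \<in> {z. 0 < Im z}" "H_k k w \<in> {z. 0 < Im z}" for w
      using that cauchy_transform_H_k_Omega_k[OF assms] unfolding Omega_k_def by simp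
  qed (use \<zeta>\<^sub>0 holomorphic_H_k[OF assms(1)] H_k_not_constant[OF assms] in
       \<open>auto intro!: continuous_intros open_halfspace_Im_gt convex_connected convex_halfspace_Im_gt\<close>)
  ultimately show "(cauchy_transform \<mu> \<longlongrightarrow> 1 / Complex x (v_k k x)) (at (P_k k x) within nt_sector (P_k k x) \<delta>)"
    using nt_sector_subset_upper_half_plane \<delta> unfolding \<zeta>\<^sub>0_def by (metis tendsto_within_subset)
qed

end
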